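(* For any subset $L\subset G$ we have $L^\#=L^{\#\#}+L^\bullet$ as ideals of $\kappa G^\#$.
   Context: Let $\kappa$ be a field of characteristic $0$. For a group $G$, let $*:\kappa G\to\kappa G$ be the $\kappa$-linear map with $g^*=g^{-1}$ for $g\in G$, and $(\kappa G)^*$ its fixed points. $A_G$ is the quotient of $\kappa G$ by the two-sided ideal generated by all $ab-ba$ with $a\in\kappa G$, $b\in(\kappa G)^*$; $*$ descends to $A_G$, and $\kappa G^\#=\{x\in A_G:x^*=x\}$ (a commutative subring of the centre of $A_G$). Group elements are identified with their images in $A_G$, and $\bar x=\tfrac12(x+x^* )$ for $x\in A_G$. For $L\subset G$: $L^\#$ is the ideal of $\kappa G^\#$ generated by $\{\overline{xl}-\bar x: x\in A_G, l\in L\}$; $L^{\#\#}$ is the ideal generated by $\{\overline{xl}-\overline{xl^{-1}}: x\in A_G, l\in L\}$; $L^\bullet$ is the ideal generated by $\{1-\bar l: l\in L\}$. *)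

theory Defs
  imports "HOL-Algebra.QuotRing"
begin

text \<open>The group algebra kG of a group G (written additively via the type class group_add,
  which need not be commutative) over a field k, as finitely supported functions G -> k
  with convolution product.\<close>

definition gsupp :: "('g \<Rightarrow> 'k::zero) \<Rightarrow> 'g set" where
  "gsupp f = {g. f g \<noteq> 0}"

definition conv :: "('g::group_add \<Rightarrow> 'k::field) \<Rightarrow> ('g \<Rightarrow> 'k) \<Rightarrow> 'g \<Rightarrow> 'k" where
  "conv f h x = (\<Sum>y\<in>gsupp f. f y * h (- y + x))"

definition delta :: "'g::group_add \<Rightarrow> 'g \<Rightarrow> 'k::field" where
  "delta g = (\<lambda>x. if x = g then 1 else 0)"

definition grpalg :: "('g::group_add \<Rightarrow> 'k::field) ring" where
  "grpalg = \<lparr> carrier = {f. finite (gsupp f)},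
              mult = conv,
              one = delta 0,
              zero = (\<lambda>_. 0),
              add = (\<lambda>f h x. f x + h x) \<rparr>"

definition star :: "('g::group_add \<Rightarrow> 'k) \<Rightarrow> 'g \<Rightarrow> 'k" where
  "star f = (\<lambda>g. f (- g))"

definition commIdeal :: "('g::group_add \<Rightarrow> 'k::field) set" where
  "commIdeal = genideal grpalg
     {a \<otimes>\<^bsub>grpalg\<^esub> b \<ominus>\<^bsub>grpalg\<^esub> b \<otimes>\<^bsub>grpalg\<^esub> a | a b.
        a \<in> carrier grpalg \<and> b \<in> carrier grpalg \<and> star b = b}"

definition AG :: "('g::group_add \<Rightarrow> 'k::field) set ring" where
  "AG = grpalg Quot commIdeal"

definition starA :: "('g::group_add \<Rightarrow> 'k) set \<Rightarrow> ('g \<Rightarrow> 'k) set" where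
  "starA X = star ` X"

definition grpA :: "'g::group_add \<Rightarrow> ('g \<Rightarrow> 'k::field) set" where
  "grpA g = commIdeal +>\<^bsub>grpalg\<^esub> delta g"

definition halfA :: "('g::group_add \<Rightarrow> 'k::field_char_0) set" where
  "halfA = commIdeal +>\<^bsub>grpalg\<^esub> (\<lambda>x. if x = 0 then 1/2 else 0)"

definition barA :: "('g::group_add \<Rightarrow> 'k::field_char_0) set \<Rightarrow> ('g \<Rightarrow> 'k) set" where
  "barA X = halfA \<otimes>\<^bsub>AG\<^esub> (X \<oplus>\<^bsub>AG\<^esub> starA X)"

definition sharpRing :: "('g::group_add \<Rightarrow> 'k::field) set ring" where
  "sharpRing = AG \<lparr> carrier := {X \<in> carrier AG. starA X = X} \<rparr>"

definition Lsharp :: "'g::group_add set \<Rightarrow> ('g \<Rightarrow> 'k::field_char_0) set set" where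
  "Lsharp L = genideal sharpRing
     {barA (x \<otimes>\<^bsub>AG\<^esub> grpA l) \<ominus>\<^bsub>AG\<^esub> barA x | x l. x \<in> carrier AG \<and> l \<in> L}"

definition Lsharpsharp :: "'g::group_add set \<Rightarrow> ('g \<Rightarrow> 'k::field_char_0) set set" where
  "Lsharpsharp L = genideal sharpRing
     {barA (x \<otimes>\<^bsub>AG\<^esub> grpA l) \<ominus>\<^bsub>AG\<^esub> barA (x \<otimes>\<^bsub>AG\<^esub> grpA (- l)) | x l.
        x \<in> carrier AG \<and> l \<in> L}"

definition Lbullet :: "'g::group_add set \<Rightarrow> ('g \<Rightarrow> 'k::field_char_0) set set" where
  "Lbullet L = genideal sharpRing
     {\<one>\<^bsub>AG\<^esub> \<ominus>\<^bsub>AG\<^esub> barA (grpA l) | l. l \<in> L}"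

end

theory Submission
  imports Defs "HOL-Algebra.Subrings"
begin

(* For l in L let g and g' be the images of l and l^{-1} in A_G, and h = 1/2.
   Elements fixed by the involution are central in A_G, so kG^# is a commutative ring, and
   for every x in A_G
       bar(g) * bar(x) = h * (bar(x g) + bar(x g')).                                (KEY)
   Hence  bar(x g) - bar(x) = h * (bar(x g) - bar(x g')) - (1 - bar(g)) * bar(x),
   which puts every generator of L^# into L^## + L^bullet.  Conversely, with x' = x g',
       bar(x g) - bar(x g') = (bar(x g) - bar(x)) + (bar(x' g) - bar(x'))   and
       1 - bar(g) = -(bar(1 g) - bar(1)),
   so the generators of L^## and L^bullet lie in L^#. *)

lemma (in ring) genideal_eq_set_add:
  assumes "A \<subseteq> carrier R" "B \<subseteq> carrier R" "C \<subseteq> carrier R"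
    and "A \<subseteq> Idl B <+>\<^bsub>R\<^esub> Idl C" "B \<subseteq> Idl A" "C \<subseteq> Idl A"
  shows "Idl A = Idl B <+>\<^bsub>R\<^esub> Idl C"
proof
  show "Idl A \<subseteq> Idl B <+>\<^bsub>R\<^esub> Idl C"
    using assms by (intro genideal_minimal add_ideals genideal_ideal)
  have "Idl B \<union> Idl C \<subseteq> Idl A"
    using assms by (intro Un_least genideal_minimal genideal_ideal)
  then have "Idl (Idl B \<union> Idl C) \<subseteq> Idl A"
    using assms by (intro genideal_minimal genideal_ideal)
  then show "Idl B <+>\<^bsub>R\<^esub> Idl C \<subseteq> Idl A"
    using assms by (simp add: union_genideal genideal_ideal)
qed

subsection \<open>The group algebra\<close>

lemma grpalg_simps[simp]:
  "carrier grpalg = {f. finite (gsupp f)}"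
  "mult grpalg = conv" "one grpalg = delta 0" "zero grpalg = (\<lambda>_. 0)"
  "add grpalg = (\<lambda>f h x. f x + h x)"
  by (simp_all add: grpalg_def)

lemma conv_superset:
  assumes "finite S" "gsupp f \<subseteq> S"
  shows "conv f h x = (\<Sum>y\<in>S. f y * h (- y + x))"
  unfolding conv_def
  by (rule sum.mono_neutral_left) (use assms in \<open>auto simp: gsupp_def\<close>)

lemma gsupp_conv: "gsupp (conv f h) \<subseteq> (\<lambda>(a,b). a + b) ` (gsupp f \<times> gsupp h)"
proof
  fix x assume "x \<in> gsupp (conv f h)"
  then have "(\<Sum>y\<in>gsupp f. f y * h (- y + x)) \<noteq> 0" by (simp add: gsupp_def conv_def)
  then obtain y where "y \<in> gsupp f" "f y * h (- y + x) \<noteq> 0"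
    by (meson sum.neutral)
  then have "y \<in> gsupp f" "- y + x \<in> gsupp h" by (auto simp: gsupp_def)
  moreover have "x = y + (- y + x)" by (simp add: add.assoc[symmetric])
  ultimately show "x \<in> (\<lambda>(a,b). a + b) ` (gsupp f \<times> gsupp h)" by force
qed

lemma finite_gsupp_conv: "finite (gsupp f) \<Longrightarrow> finite (gsupp h) \<Longrightarrow> finite (gsupp (conv f h))"
  by (rule finite_subset[OF gsupp_conv]) auto

text \<open>Associativity of convolution: both sides are the sum of f a * h b * k c over a + b + c = x.\<close>
lemma conv_assoc:
  fixes f h k :: "'g::group_add \<Rightarrow> 'k::field"
  assumes F: "finite (gsupp f)" and H: "finite (gsupp h)" and K: "finite (gsupp k)"
  shows "conv (conv f h) k x = conv f (conv h k) x"
proof -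
  let ?S = "(\<lambda>(a,b). a + b) ` (gsupp f \<times> gsupp h)"
  have S: "finite ?S" using F H by auto
  have inner: "(\<Sum>y\<in>?S. h (- a + y) * k (- y + x)) = (\<Sum>b\<in>gsupp h. h b * k (- b + - a + x))"
    if a: "a \<in> gsupp f" for a
  proof -
    have "(\<Sum>y\<in>?S. h (- a + y) * k (- y + x)) = (\<Sum>b\<in>(\<lambda>y. - a + y) ` ?S. h b * k (- b + - a + x))"
      by (subst sum.reindex) (auto simp: inj_on_def add.assoc[symmetric] minus_add)
    also have "\<dots> = (\<Sum>b\<in>gsupp h. h b * k (- b + - a + x))"
    proof (rule sum.mono_neutral_right)
      show "finite ((\<lambda>y. - a + y) ` ?S)" using S by simp
      show "gsupp h \<subseteq> (\<lambda>y. - a + y) ` ?S"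
      proof
        fix b assume "b \<in> gsupp h"
        then have "a + b \<in> ?S" using a by force
        moreover have "b = - a + (a + b)" by (simp add: add.assoc[symmetric])
        ultimately show "b \<in> (\<lambda>y. - a + y) ` ?S" by blast
      qed
    qed (auto simp: gsupp_def)
    finally show ?thesis .
  qed
  have "conv (conv f h) k x = (\<Sum>y\<in>?S. conv f h y * k (- y + x))"
    by (rule conv_superset[OF S gsupp_conv])
  also have "\<dots> = (\<Sum>y\<in>?S. \<Sum>a\<in>gsupp f. f a * (h (- a + y) * k (- y + x)))"
    by (simp add: conv_def sum_distrib_right mult.assoc)
  also have "\<dots> = (\<Sum>a\<in>gsupp f. f a * (\<Sum>y\<in>?S. h (- a + y) * k (- y + x)))"
    by (subst sum.swap) (simp add: sum_distrib_left)
  also have "\<dots> = (\<Sum>a\<in>gsupp f. f a * (\<Sum>b\<in>gsupp h. h b * k (- b + - a + x)))"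
    by (rule sum.cong) (simp_all add: inner)
  also have "\<dots> = conv f (conv h k) x"
    by (simp only: conv_def add.assoc)
  finally show ?thesis .
qed

lemma abelian_group_grpalg: "abelian_group (grpalg :: ('g::group_add \<Rightarrow> 'k::field) ring)"
proof (rule abelian_groupI, simp_all)
  fix f h :: "'g \<Rightarrow> 'k" assume "finite (gsupp f)" "finite (gsupp h)"
  then show "finite (gsupp (\<lambda>x. f x + h x))"
    by (rule finite_subset[rotated, OF finite_UnI]) (auto simp: gsupp_def)
next
  show "finite (gsupp (\<lambda>_. 0::'k))" by (simp add: gsupp_def)
next
  fix f h k :: "'g \<Rightarrow> 'k" show "(\<lambda>x. f x + h x + k x) = (\<lambda>x. f x + (h x + k x))"
    by (simp add: add.assoc)
next
  fix f h :: "'g \<Rightarrow> 'k" show "(\<lambda>x. f x + h x) = (\<lambda>x. h x + f x)"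
    by (simp add: add.commute)
next
  fix f :: "'g \<Rightarrow> 'k" assume "finite (gsupp f)"
  then show "\<exists>y. finite (gsupp y) \<and> (\<lambda>x. y x + f x) = (\<lambda>_. 0)"
    by (intro exI[of _ "\<lambda>x. - f x"]) (auto simp: gsupp_def)
qed

lemma monoid_grpalg: "monoid (grpalg :: ('g::group_add \<Rightarrow> 'k::field) ring)"
proof (rule monoidI, simp_all)
  fix f h :: "'g \<Rightarrow> 'k" assume "finite (gsupp f)" "finite (gsupp h)"
  then show "finite (gsupp (conv f h))" by (rule finite_gsupp_conv)
next
  show "finite (gsupp (delta 0 :: 'g \<Rightarrow> 'k))"
    by (rule finite_subset[of _ "{0}"]) (auto simp: gsupp_def delta_def)
next
  fix f :: "'g \<Rightarrow> 'k" assume F: "finite (gsupp f)"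
  have "gsupp (delta 0 :: 'g \<Rightarrow> 'k) = {0}" by (auto simp: gsupp_def delta_def)
  then show "conv (delta 0) f = f"
    by (simp add: conv_def delta_def fun_eq_iff)
  show "conv f (delta 0) = f"
  proof
    fix x
    have "conv f (delta 0) x = (\<Sum>y\<in>insert x (gsupp f). f y * delta 0 (- y + x))"
      by (rule conv_superset) (use F in auto)
    also have "\<dots> = (\<Sum>y\<in>insert x (gsupp f). if y = x then f y else 0)"
      by (rule sum.cong) (auto simp: delta_def neg_eq_iff_add_eq_0 add_eq_0_iff2 eq_neg_iff_add_eq_0[symmetric])
    also have "\<dots> = f x" using F by (simp add: sum.delta)
    finally show "conv f (delta 0) x = f x" .
  qed
next
  fix f h k :: "'g \<Rightarrow> 'k" assume "finite (gsupp f)" "finite (gsupp h)" "finite (gsupp k)"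
  then show "conv (conv f h) k = conv f (conv h k)" by (simp add: fun_eq_iff conv_assoc)
qed

lemma ring_grpalg: "ring (grpalg :: ('g::group_add \<Rightarrow> 'k::field) ring)"
proof (rule ringI[OF abelian_group_grpalg monoid_grpalg])
  fix f h k :: "'g \<Rightarrow> 'k"
  assume F: "f \<in> carrier grpalg" and H: "h \<in> carrier grpalg" and K: "k \<in> carrier grpalg"
  show "(f \<oplus>\<^bsub>grpalg\<^esub> h) \<otimes>\<^bsub>grpalg\<^esub> k = f \<otimes>\<^bsub>grpalg\<^esub> k \<oplus>\<^bsub>grpalg\<^esub> h \<otimes>\<^bsub>grpalg\<^esub> k"
  proof (simp, rule ext)
    fix x
    have S: "finite (gsupp f \<union> gsupp h)" using F H by simp
    show "conv (\<lambda>x. f x + h x) k x = conv f k x + conv h k x"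
      by (subst (1 2 3) conv_superset[OF S]) (auto simp: gsupp_def sum.distrib distrib_right)
  qed
  show "k \<otimes>\<^bsub>grpalg\<^esub> (f \<oplus>\<^bsub>grpalg\<^esub> h) = k \<otimes>\<^bsub>grpalg\<^esub> f \<oplus>\<^bsub>grpalg\<^esub> k \<otimes>\<^bsub>grpalg\<^esub> h"
    by (simp add: fun_eq_iff conv_def sum.distrib distrib_left)
qed

interpretation GA: ring "grpalg :: ('g::group_add \<Rightarrow> 'k::field) ring" by (rule ring_grpalg)

lemma grpalg_minus:
  fixes f :: "'g::group_add \<Rightarrow> 'k::field"
  assumes "f \<in> carrier grpalg" shows "\<ominus>\<^bsub>grpalg\<^esub> f = (\<lambda>x. - f x)"
proof (rule GA.minus_equality)
  have "gsupp (\<lambda>x. - f x) = gsupp f" by (auto simp: gsupp_def)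
  then show "(\<lambda>x. - f x) \<in> carrier grpalg" using assms by simp
qed (use assms in \<open>simp_all add: fun_eq_iff\<close>)

lemma grpalg_diff:
  fixes f h :: "'g::group_add \<Rightarrow> 'k::field"
  assumes "f \<in> carrier grpalg" "h \<in> carrier grpalg"
  shows "f \<ominus>\<^bsub>grpalg\<^esub> h = (\<lambda>x. f x - h x)"
  using assms by (simp add: a_minus_def grpalg_minus)

definition scalar :: "'k::field \<Rightarrow> 'g::group_add \<Rightarrow> 'k" where
  "scalar c = (\<lambda>x. if x = 0 then c else 0)"

lemma gsupp_scalar: "gsupp (scalar c) \<subseteq> {0}"
  by (auto simp: gsupp_def scalar_def)

lemma scalar_carrier: "scalar c \<in> carrier grpalg"
  using finite_subset[OF gsupp_scalar] by simp

lemma conv_scalar: "conv (scalar c) f = (\<lambda>x. c * f x)"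
  by (rule ext, subst conv_superset[OF _ gsupp_scalar]) (simp_all add: scalar_def)

lemma gsupp_delta: "gsupp (delta a :: 'g::group_add \<Rightarrow> 'k::field) = {a}"
  by (auto simp: gsupp_def delta_def)

lemma delta_carrier: "(delta a :: 'g::group_add \<Rightarrow> 'k::field) \<in> carrier grpalg"
  by (simp add: gsupp_delta)

lemma conv_delta: "conv (delta a) (delta b) = (delta (a + b) :: 'g::group_add \<Rightarrow> 'k::field)"
proof
  fix x
  have "(- a + x = b) = (x = a + b)" by (metis add.assoc add_minus_cancel minus_add_cancel)
  then show "conv (delta a) (delta b) x = (delta (a + b) :: 'g \<Rightarrow> 'k) x"
    by (simp add: conv_def gsupp_delta) (simp add: delta_def)
qed

lemma gsupp_star: "gsupp (star f) = uminus ` gsupp f"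
  by (auto simp: gsupp_def star_def image_iff) (metis minus_minus)

lemma star_carrier: "f \<in> carrier grpalg \<Longrightarrow> star f \<in> carrier grpalg"
  by (simp add: gsupp_star)

lemma star_apply: "star f x = f (- x)"
  by (simp add: star_def)

lemma star_star[simp]: "star (star f) = f"
  by (simp add: star_def)

lemma star_scalar: "star (scalar c) = scalar c"
  by (simp add: star_def scalar_def fun_eq_iff)

lemma star_delta: "star (delta a) = (delta (- a) :: 'g::group_add \<Rightarrow> 'k::field)"
  by (auto simp: star_def delta_def fun_eq_iff)

lemma conv_double:
  fixes f h :: "'g::group_add \<Rightarrow> 'k::field"
  assumes "finite F" "gsupp f \<subseteq> F" "finite H" "gsupp h \<subseteq> H"
  shows "conv f h x = (\<Sum>a\<in>F. \<Sum>b\<in>H. if a + b = x then f a * h b else 0)"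
proof -
  have "conv f h x = (\<Sum>a\<in>F. f a * h (- a + x))" by (rule conv_superset) (use assms in auto)
  also have "\<dots> = (\<Sum>a\<in>F. \<Sum>b\<in>H. if a + b = x then f a * h b else 0)"
  proof (rule sum.cong[OF refl])
    fix a
    have eq: "(a + b = x) = (b = - a + x)" for b
      by (metis add.assoc add.left_inverse add_0 add_minus_cancel)
    have "(\<Sum>b\<in>H. if a + b = x then f a * h b else 0) = (\<Sum>b\<in>H. if b = - a + x then f a * h b else 0)"
      by (simp add: eq)
    also have "\<dots> = f a * h (- a + x)"
      using assms by (auto simp: sum.delta' gsupp_def)
    finally show "f a * h (- a + x) = (\<Sum>b\<in>H. if a + b = x then f a * h b else 0)" by simp
  qed
  finally show ?thesis .
qed

text \<open>(f h)^* = h^* f^*: the double sum is symmetric under (a, b) \<mapsto> (-b, -a).\<close>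
lemma star_conv:
  fixes f h :: "'g::group_add \<Rightarrow> 'k::field"
  assumes F: "finite (gsupp f)" and H: "finite (gsupp h)"
  shows "star (conv f h) = conv (star h) (star f)"
proof
  fix x
  have "star (conv f h) x = (\<Sum>a\<in>gsupp f. \<Sum>b\<in>gsupp h. if a + b = - x then f a * h b else 0)"
    unfolding star_def by (rule conv_double) (use F H in auto)
  also have "\<dots> = (\<Sum>b\<in>gsupp h. \<Sum>a\<in>gsupp f. if a + b = - x then f a * h b else 0)"
    by (rule sum.swap)
  also have "\<dots> = (\<Sum>b\<in>gsupp h. \<Sum>a\<in>gsupp f. if - b + - a = x then h b * f a else 0)"
  proof -
    have "(a + b = - x) = (- b + - a = x)" for a b :: 'g
      by (metis minus_add minus_minus)
    then show ?thesis by (intro sum.cong refl) (simp add: mult.commute)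
  qed
  also have "\<dots> = (\<Sum>b\<in>uminus ` gsupp h. \<Sum>a\<in>uminus ` gsupp f. if b + a = x then h (- b) * f (- a) else 0)"
    by (simp add: sum.reindex inj_on_def) (simp only: minus_minus)
  also have "\<dots> = conv (star h) (star f) x"
    unfolding star_apply[of h, symmetric] star_apply[of f, symmetric]
    by (rule conv_double[symmetric]) (use F H in \<open>auto simp: gsupp_star\<close>)
  finally show "star (conv f h) x = conv (star h) (star f) x" .
qed

lemma star_mult:
  "f \<in> carrier grpalg \<Longrightarrow> h \<in> carrier grpalg \<Longrightarrow>
    star (f \<otimes>\<^bsub>grpalg\<^esub> h) = star h \<otimes>\<^bsub>grpalg\<^esub> star (f :: 'g::group_add \<Rightarrow> 'k::field)"
  by (simp add: star_conv)

lemma star_add: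
  "star (f \<oplus>\<^bsub>grpalg\<^esub> h) = star f \<oplus>\<^bsub>grpalg\<^esub> star (h :: 'g::group_add \<Rightarrow> 'k::field)"
  by (simp add: star_def)

lemma star_uminus:
  "f \<in> carrier grpalg \<Longrightarrow> star (\<ominus>\<^bsub>grpalg\<^esub> f) = \<ominus>\<^bsub>grpalg\<^esub> star (f :: 'g::group_add \<Rightarrow> 'k::field)"
  using star_carrier[of f] by (simp add: grpalg_minus del: grpalg_simps) (simp add: star_def)

lemma star_minus:
  "f \<in> carrier grpalg \<Longrightarrow> h \<in> carrier grpalg \<Longrightarrow>
   star (f \<ominus>\<^bsub>grpalg\<^esub> h) = star f \<ominus>\<^bsub>grpalg\<^esub> star (h :: 'g::group_add \<Rightarrow> 'k::field)"
  by (simp add: a_minus_def star_add star_uminus del: grpalg_simps)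

lemma star_one: "star (\<one>\<^bsub>grpalg\<^esub>) = (\<one>\<^bsub>grpalg\<^esub> :: 'g::group_add \<Rightarrow> 'k::field)"
  by (simp add: star_def delta_def fun_eq_iff)

subsection \<open>The commutator ideal is stable under the involution\<close>

definition commGens :: "('g::group_add \<Rightarrow> 'k::field) set" where
  "commGens = {a \<otimes>\<^bsub>grpalg\<^esub> b \<ominus>\<^bsub>grpalg\<^esub> b \<otimes>\<^bsub>grpalg\<^esub> a | a b.
        a \<in> carrier grpalg \<and> b \<in> carrier grpalg \<and> star b = b}"

lemma commGens_carrier: "commGens \<subseteq> carrier grpalg"
  unfolding commGens_def by (auto intro!: GA.minus_closed GA.m_closed simp del: grpalg_simps)

lemma commIdeal_genideal: "(commIdeal :: ('g::group_add \<Rightarrow> 'k::field) set) = Idl\<^bsub>grpalg\<^esub> commGens"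
  unfolding commIdeal_def commGens_def ..

lemma commIdeal_ideal: "ideal (commIdeal :: ('g::group_add \<Rightarrow> 'k::field) set) grpalg"
  unfolding commIdeal_genideal by (rule GA.genideal_ideal[OF commGens_carrier])

lemma commGens_in: "x \<in> commGens \<Longrightarrow> x \<in> commIdeal"
  unfolding commIdeal_genideal using GA.genideal_self[OF commGens_carrier] by blast

lemma star_preimage_ideal:
  fixes I :: "('g::group_add \<Rightarrow> 'k::field) set"
  assumes "ideal I grpalg"
  shows "ideal {a \<in> carrier grpalg. star a \<in> I} grpalg"
proof -
  interpret I: ideal I grpalg by (rule assms)
  let ?J = "{a \<in> carrier grpalg. star a \<in> I}"
  show ?thesis
  proof (rule idealI[OF ring_grpalg])
    show "subgroup ?J (add_monoid grpalg)"
    proof (rule GA.add.subgroupI)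
      show "?J \<subseteq> carrier grpalg" by blast
      have "\<zero>\<^bsub>grpalg\<^esub> \<in> ?J" using I.zero_closed by (simp add: star_def gsupp_def)
      then show "?J \<noteq> {}" by blast
    next
      fix a assume "a \<in> ?J" then show "\<ominus>\<^bsub>grpalg\<^esub> a \<in> ?J"
        by (simp only: mem_Collect_eq star_uminus) (auto intro: I.a_inv_closed simp del: grpalg_simps)
    next
      fix a b assume "a \<in> ?J" "b \<in> ?J" then show "a \<oplus>\<^bsub>grpalg\<^esub> b \<in> ?J"
        by (simp only: mem_Collect_eq star_add) (auto intro: I.a_closed simp del: grpalg_simps)
    qed
  next
    fix a x :: "'g \<Rightarrow> 'k" assume "a \<in> ?J" "x \<in> carrier grpalg"
    then show "x \<otimes>\<^bsub>grpalg\<^esub> a \<in> ?J" "a \<otimes>\<^bsub>grpalg\<^esub> x \<in> ?J"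
      by (simp_all only: mem_Collect_eq star_mult)
         (auto intro: I.I_r_closed I.I_l_closed star_carrier simp del: grpalg_simps)
  qed
qed

text \<open>(a b - b a)^* = -(a^* b - b a^*) when b is symmetric, again a commutator generator.\<close>
lemma star_commGens:
  fixes g :: "'g::group_add \<Rightarrow> 'k::field"
  assumes "g \<in> commGens" shows "star g \<in> commIdeal"
proof -
  interpret CI: ideal "commIdeal :: ('g \<Rightarrow> 'k) set" grpalg by (rule commIdeal_ideal)
  obtain a b where ab: "a \<in> carrier grpalg" "b \<in> carrier grpalg" "star b = b"
    and g: "g = a \<otimes>\<^bsub>grpalg\<^esub> b \<ominus>\<^bsub>grpalg\<^esub> b \<otimes>\<^bsub>grpalg\<^esub> a"
    using assms unfolding commGens_def by blast
  have sa: "star a \<in> carrier grpalg" using ab by (simp add: star_carrier del: grpalg_simps)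
  have "star g = star (a \<otimes>\<^bsub>grpalg\<^esub> b) \<ominus>\<^bsub>grpalg\<^esub> star (b \<otimes>\<^bsub>grpalg\<^esub> a)"
    unfolding g by (rule star_minus) (use ab in \<open>simp_all del: grpalg_simps\<close>)
  also have "\<dots> = b \<otimes>\<^bsub>grpalg\<^esub> star a \<ominus>\<^bsub>grpalg\<^esub> star a \<otimes>\<^bsub>grpalg\<^esub> b"
    using ab by (simp add: star_mult del: grpalg_simps)
  also have "\<dots> = \<ominus>\<^bsub>grpalg\<^esub> (star a \<otimes>\<^bsub>grpalg\<^esub> b \<ominus>\<^bsub>grpalg\<^esub> b \<otimes>\<^bsub>grpalg\<^esub> star a)"
    using ab sa by (simp add: GA.minus_add GA.minus_eq GA.a_comm del: grpalg_simps)
  finally have g_eq: "star g = \<ominus>\<^bsub>grpalg\<^esub> (star a \<otimes>\<^bsub>grpalg\<^esub> b \<ominus>\<^bsub>grpalg\<^esub> b \<otimes>\<^bsub>grpalg\<^esub> star a)" .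
  have "star a \<otimes>\<^bsub>grpalg\<^esub> b \<ominus>\<^bsub>grpalg\<^esub> b \<otimes>\<^bsub>grpalg\<^esub> star a \<in> commIdeal"
    by (rule commGens_in) (unfold commGens_def, use ab sa in blast)
  then show ?thesis unfolding g_eq by (rule CI.a_inv_closed)
qed

text \<open>Hence the commutator ideal, being generated by commGens, lies in the *-preimage of itself.\<close>
lemma star_commIdeal:
  fixes a :: "'g::group_add \<Rightarrow> 'k::field"
  assumes "a \<in> commIdeal" shows "star a \<in> commIdeal"
proof -
  have "commGens \<subseteq> {a \<in> carrier grpalg. star a \<in> (commIdeal :: ('g \<Rightarrow> 'k) set)}"
    using commGens_carrier star_commGens by blast
  then have "Idl\<^bsub>grpalg\<^esub> commGens \<subseteq> {a \<in> carrier grpalg. star a \<in> (commIdeal :: ('g \<Rightarrow> 'k) set)}"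
    by (rule GA.genideal_minimal[OF star_preimage_ideal[OF commIdeal_ideal]])
  then show ?thesis using assms unfolding commIdeal_genideal[symmetric] by blast
qed

lemma star_image_commIdeal: "star ` commIdeal = (commIdeal :: ('g::group_add \<Rightarrow> 'k::field) set)"
  using star_commIdeal by (auto intro: image_eqI[of _ star, OF star_star[symmetric]])

subsection \<open>The quotient A_G and the descended involution\<close>

abbreviation proj :: "('g::group_add \<Rightarrow> 'k::field) \<Rightarrow> ('g \<Rightarrow> 'k) set" where
  "proj a \<equiv> commIdeal +>\<^bsub>grpalg\<^esub> a"

lemma ring_AG: "ring (AG :: ('g::group_add \<Rightarrow> 'k::field) set ring)"
  unfolding AG_def by (rule ideal.quotient_is_ring[OF commIdeal_ideal])

interpretation AG: ring "AG :: ('g::group_add \<Rightarrow> 'k::field) set ring" by (rule ring_AG)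

lemma proj_hom: "(proj :: ('g::group_add \<Rightarrow> 'k::field) \<Rightarrow> _) \<in> ring_hom grpalg AG"
  unfolding AG_def by (rule ideal.rcos_ring_hom[OF commIdeal_ideal])

lemma proj_carrier: "a \<in> carrier grpalg \<Longrightarrow> proj (a :: 'g::group_add \<Rightarrow> 'k::field) \<in> carrier AG"
  using ring_hom_closed[OF proj_hom] by blast

lemma proj_add: "a \<in> carrier grpalg \<Longrightarrow> b \<in> carrier grpalg \<Longrightarrow>
  proj (a \<oplus>\<^bsub>grpalg\<^esub> b) = proj a \<oplus>\<^bsub>AG\<^esub> proj (b :: 'g::group_add \<Rightarrow> 'k::field)"
  using ring_hom_add[OF proj_hom] by blast

lemma proj_mult: "a \<in> carrier grpalg \<Longrightarrow> b \<in> carrier grpalg \<Longrightarrow>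
  proj (a \<otimes>\<^bsub>grpalg\<^esub> b) = proj a \<otimes>\<^bsub>AG\<^esub> proj (b :: 'g::group_add \<Rightarrow> 'k::field)"
  using ring_hom_mult[OF proj_hom] by blast

lemma proj_one: "proj (\<one>\<^bsub>grpalg\<^esub>) = (\<one>\<^bsub>AG\<^esub> :: ('g::group_add \<Rightarrow> 'k::field) set)"
  using ring_hom_one[OF proj_hom] by blast

lemma AG_carrierE:
  assumes "X \<in> carrier (AG :: ('g::group_add \<Rightarrow> 'k::field) set ring)"
  obtains a where "a \<in> carrier grpalg" "X = proj a"
  using assms unfolding AG_def FactRing_def A_RCOSETS_def RCOSETS_def a_r_coset_def
  by auto

lemma proj_eq_iff:
  fixes a b :: "'g::group_add \<Rightarrow> 'k::field"
  assumes "a \<in> carrier grpalg" "b \<in> carrier grpalg"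
  shows "proj a = proj b \<longleftrightarrow> a \<ominus>\<^bsub>grpalg\<^esub> b \<in> commIdeal"
proof -
  interpret CI: ideal "commIdeal :: ('g \<Rightarrow> 'k) set" grpalg by (rule commIdeal_ideal)
  have "a \<in> proj b \<longleftrightarrow> a \<ominus>\<^bsub>grpalg\<^esub> b \<in> commIdeal"
    using CI.a_rcos_module_minus[OF ring_grpalg assms(2,1)] by simp
  moreover have "a \<in> proj b \<longleftrightarrow> proj a = proj b"
    using CI.a_repr_independence'[OF _ assms(2)] CI.a_rcos_self[OF assms(1)] by auto
  ultimately show ?thesis by simp
qed

text \<open>The involution of A_G is induced by * on representatives; this uses *-stability
  of the commutator ideal.\<close>
lemma starA_proj:
  fixes a :: "'g::group_add \<Rightarrow> 'k::field"
  shows "starA (proj a) = proj (star a)"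
proof -
  have "starA (proj a) = (\<lambda>i. (\<lambda>x. i x + star a x)) ` (star ` commIdeal)"
    unfolding starA_def a_r_coset_def r_coset_def by (auto simp: star_def)
  then show ?thesis by (auto simp: star_image_commIdeal a_r_coset_def r_coset_def)
qed

lemma starA_carrier:
  "X \<in> carrier (AG :: ('g::group_add \<Rightarrow> 'k::field) set ring) \<Longrightarrow> starA X \<in> carrier AG"
  by (erule AG_carrierE) (simp only: starA_proj proj_carrier star_carrier)

lemma starA_starA:
  "X \<in> carrier (AG :: ('g::group_add \<Rightarrow> 'k::field) set ring) \<Longrightarrow> starA (starA X) = X"
  by (erule AG_carrierE) (simp add: starA_proj)

lemma starA_add:
  "X \<in> carrier (AG :: ('g::group_add \<Rightarrow> 'k::field) set ring) \<Longrightarrow> Y \<in> carrier AG \<Longrightarrow>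
   starA (X \<oplus>\<^bsub>AG\<^esub> Y) = starA X \<oplus>\<^bsub>AG\<^esub> starA Y"
  by (elim AG_carrierE) (simp only: proj_add[symmetric] starA_proj star_carrier star_add)

lemma starA_mult:
  "X \<in> carrier (AG :: ('g::group_add \<Rightarrow> 'k::field) set ring) \<Longrightarrow> Y \<in> carrier AG \<Longrightarrow>
   starA (X \<otimes>\<^bsub>AG\<^esub> Y) = starA Y \<otimes>\<^bsub>AG\<^esub> starA X"
  by (elim AG_carrierE) (simp only: proj_mult[symmetric] starA_proj star_carrier star_mult)

lemma starA_one: "starA (\<one>\<^bsub>AG\<^esub>) = (\<one>\<^bsub>AG\<^esub> :: ('g::group_add \<Rightarrow> 'k::field) set)"
  by (simp only: proj_one[symmetric] starA_proj star_one)

lemma starA_zero: "starA (\<zero>\<^bsub>AG\<^esub>) = (\<zero>\<^bsub>AG\<^esub> :: ('g::group_add \<Rightarrow> 'k::field) set)"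
proof -
  have "\<zero>\<^bsub>AG\<^esub> = (proj \<zero>\<^bsub>grpalg\<^esub> :: ('g \<Rightarrow> 'k) set)"
    by (rule ring_hom_zero[OF proj_hom ring_grpalg ring_AG, symmetric])
  then show ?thesis by (simp add: starA_proj star_def)
qed

lemma starA_uminus:
  assumes X: "X \<in> carrier (AG :: ('g::group_add \<Rightarrow> 'k::field) set ring)"
  shows "starA (\<ominus>\<^bsub>AG\<^esub> X) = \<ominus>\<^bsub>AG\<^esub> starA X"
proof -
  have "starA (\<ominus>\<^bsub>AG\<^esub> X) \<oplus>\<^bsub>AG\<^esub> starA X = \<zero>\<^bsub>AG\<^esub>"
    using X by (simp only: starA_add[symmetric] AG.a_inv_closed AG.l_neg starA_zero)
  then show ?thesis
    using X by (intro AG.minus_equality[symmetric]) (simp_all add: starA_carrier)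
qed

subsection \<open>Symmetric elements of A_G are central, so kG^# is a commutative ring\<close>

text \<open>A symmetric class X = X^* has a symmetric representative, namely (a + a^*)/2 for any
  representative a (here 2 must be invertible).\<close>
lemma symmetric_representative:
  fixes X :: "('g::group_add \<Rightarrow> 'k::field_char_0) set"
  assumes X: "X \<in> carrier AG" and XX: "starA X = X"
  obtains b where "b \<in> carrier grpalg" "star b = b" "X = proj b"
proof -
  interpret CI: ideal "commIdeal :: ('g \<Rightarrow> 'k) set" grpalg by (rule commIdeal_ideal)
  obtain a where a: "a \<in> carrier grpalg" "X = proj a" using X by (rule AG_carrierE)
  have sa: "star a \<in> carrier grpalg" using a by (simp only: star_carrier)
  have "proj (star a) = proj a" using XX a by (simp add: starA_proj)
  then have d: "star a \<ominus>\<^bsub>grpalg\<^esub> a \<in> commIdeal" using proj_eq_iff[OF sa a(1)] by simp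
  define b where "b = (\<lambda>x. (a x + star a x) / 2)"
  have b: "b \<in> carrier grpalg"
  proof -
    have "finite (gsupp b)"
      by (rule finite_subset[of _ "gsupp a \<union> gsupp (star a)"])
         (use a sa in \<open>auto simp: gsupp_def b_def\<close>)
    then show ?thesis by simp
  qed
  have "b \<ominus>\<^bsub>grpalg\<^esub> a = scalar (1/2) \<otimes>\<^bsub>grpalg\<^esub> (star a \<ominus>\<^bsub>grpalg\<^esub> a)"
    using a sa b by (simp add: grpalg_diff conv_scalar del: grpalg_simps)
      (simp add: b_def fun_eq_iff field_simps conv_scalar)
  also have "\<dots> \<in> commIdeal" by (rule CI.I_l_closed[OF d scalar_carrier])
  finally have "proj b = proj a" using proj_eq_iff[OF b a(1)] by simp
  moreover have "star b = b" by (simp add: b_def star_def fun_eq_iff add.commute)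
  ultimately show ?thesis using that b a(2) by simp
qed

text \<open>Symmetric elements are central in A_G: for a symmetric representative b, the
  commutator c b - b c is one of the generators of the commutator ideal.\<close>
lemma symmetric_central:
  fixes X :: "('g::group_add \<Rightarrow> 'k::field_char_0) set"
  assumes X: "X \<in> carrier AG" "starA X = X" and Y: "Y \<in> carrier AG"
  shows "X \<otimes>\<^bsub>AG\<^esub> Y = Y \<otimes>\<^bsub>AG\<^esub> X"
proof -
  obtain b where b: "b \<in> carrier grpalg" "star b = b" "X = proj b"
    using X by (rule symmetric_representative)
  obtain c where c: "c \<in> carrier grpalg" "Y = proj c" using Y by (rule AG_carrierE)
  have "c \<otimes>\<^bsub>grpalg\<^esub> b \<ominus>\<^bsub>grpalg\<^esub> b \<otimes>\<^bsub>grpalg\<^esub> c \<in> commIdeal"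
    by (rule commGens_in) (unfold commGens_def, use b c in blast)
  then have "proj (c \<otimes>\<^bsub>grpalg\<^esub> b) = proj (b \<otimes>\<^bsub>grpalg\<^esub> c)"
    using proj_eq_iff[OF GA.m_closed GA.m_closed] b(1) c(1) by blast
  then show ?thesis using b c by (simp add: proj_mult del: grpalg_simps)
qed

lemma carrier_sharpRing:
  "carrier (sharpRing :: ('g::group_add \<Rightarrow> 'k::field) set ring) = {X \<in> carrier AG. starA X = X}"
  by (simp add: sharpRing_def)

lemma sharpRing_ops:
  "mult (sharpRing :: ('g::group_add \<Rightarrow> 'k::field) set ring) = mult AG"
  "add (sharpRing :: ('g::group_add \<Rightarrow> 'k::field) set ring) = add AG"
  "one (sharpRing :: ('g::group_add \<Rightarrow> 'k::field) set ring) = one AG"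
  "zero (sharpRing :: ('g::group_add \<Rightarrow> 'k::field) set ring) = zero AG"
  by (simp_all add: sharpRing_def)

text \<open>Symmetric elements are closed under the ring operations; products because they commute.\<close>
lemma subring_sharp:
  "subring (carrier sharpRing) (AG :: ('g::group_add \<Rightarrow> 'k::field_char_0) set ring)"
proof (rule AG.subringI)
  show "carrier sharpRing \<subseteq> (carrier AG :: ('g \<Rightarrow> 'k) set set)"
    by (auto simp: carrier_sharpRing)
  show "\<one>\<^bsub>AG\<^esub> \<in> (carrier sharpRing :: ('g \<Rightarrow> 'k) set set)"
    by (simp add: carrier_sharpRing starA_one)
next
  fix X :: "('g \<Rightarrow> 'k) set" assume "X \<in> carrier sharpRing"
  then show "\<ominus>\<^bsub>AG\<^esub> X \<in> carrier sharpRing"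
    by (simp add: carrier_sharpRing starA_uminus)
next
  fix X Y :: "('g \<Rightarrow> 'k) set" assume "X \<in> carrier sharpRing" "Y \<in> carrier sharpRing"
  then show "X \<otimes>\<^bsub>AG\<^esub> Y \<in> carrier sharpRing" "X \<oplus>\<^bsub>AG\<^esub> Y \<in> carrier sharpRing"
    by (simp_all add: carrier_sharpRing starA_mult starA_add symmetric_central)
qed

lemma cring_sharpRing: "cring (sharpRing :: ('g::group_add \<Rightarrow> 'k::field_char_0) set ring)"
proof -
  have "subcring (carrier sharpRing) (AG :: ('g \<Rightarrow> 'k) set ring)"
    by (rule AG.subcringI[OF subring_sharp]) (auto simp: carrier_sharpRing symmetric_central)
  then show ?thesis
    by (subst (asm) AG.subcring_iff) (auto simp: carrier_sharpRing sharpRing_def)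
qed

interpretation S: cring "sharpRing :: ('g::group_add \<Rightarrow> 'k::field_char_0) set ring"
  by (rule cring_sharpRing)

lemma sharpRing_uminus:
  fixes X :: "('g::group_add \<Rightarrow> 'k::field_char_0) set"
  assumes X: "X \<in> carrier sharpRing"
  shows "\<ominus>\<^bsub>sharpRing\<^esub> X = \<ominus>\<^bsub>AG\<^esub> X"
proof (rule S.minus_equality)
  show "X \<in> carrier sharpRing" by (rule X)
  show "\<ominus>\<^bsub>AG\<^esub> X \<in> carrier sharpRing" using X by (rule subringE(5)[OF subring_sharp])
  show "\<ominus>\<^bsub>AG\<^esub> X \<oplus>\<^bsub>sharpRing\<^esub> X = \<zero>\<^bsub>sharpRing\<^esub>"
    using X by (simp add: sharpRing_ops carrier_sharpRing AG.l_neg)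
qed

lemma halfA_proj: "halfA = proj (scalar (1/2) :: 'g::group_add \<Rightarrow> 'k::field_char_0)"
  by (simp add: halfA_def scalar_def)

lemma halfA_carrier: "(halfA :: ('g::group_add \<Rightarrow> 'k::field_char_0) set) \<in> carrier AG"
  by (simp only: halfA_proj proj_carrier scalar_carrier)

lemma starA_halfA: "starA (halfA :: ('g::group_add \<Rightarrow> 'k::field_char_0) set) = halfA"
  by (simp only: halfA_proj starA_proj star_scalar)

lemma halfA_sharp: "(halfA :: ('g::group_add \<Rightarrow> 'k::field_char_0) set) \<in> carrier sharpRing"
  by (simp add: carrier_sharpRing halfA_carrier starA_halfA)

lemma halfA_add: "halfA \<oplus>\<^bsub>AG\<^esub> halfA = (\<one>\<^bsub>AG\<^esub> :: ('g::group_add \<Rightarrow> 'k::field_char_0) set)"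
proof -
  have "scalar (1/2) \<oplus>\<^bsub>grpalg\<^esub> scalar (1/2) = (\<one>\<^bsub>grpalg\<^esub> :: 'g \<Rightarrow> 'k)"
    by (simp add: scalar_def delta_def fun_eq_iff)
  then show ?thesis
    by (simp only: halfA_proj proj_add[symmetric] scalar_carrier proj_one)
qed

lemma grpA_carrier: "(grpA l :: ('g::group_add \<Rightarrow> 'k::field) set) \<in> carrier AG"
  by (simp only: grpA_def proj_carrier delta_carrier)

lemma starA_grpA: "starA (grpA l :: ('g::group_add \<Rightarrow> 'k::field) set) = grpA (- l)"
  by (simp only: grpA_def starA_proj star_delta)

lemma grpA_mult: "grpA a \<otimes>\<^bsub>AG\<^esub> grpA b = (grpA (a + b) :: ('g::group_add \<Rightarrow> 'k::field) set)"
  by (simp only: grpA_def proj_mult[symmetric] delta_carrier) (simp add: conv_delta)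

lemma grpA_zero: "grpA 0 = (\<one>\<^bsub>AG\<^esub> :: ('g::group_add \<Rightarrow> 'k::field) set)"
  by (simp add: grpA_def proj_one[symmetric])

lemma barA_sharp:
  fixes X :: "('g::group_add \<Rightarrow> 'k::field_char_0) set"
  assumes X: "X \<in> carrier AG"
  shows "barA X \<in> carrier sharpRing"
proof -
  have sX: "starA X \<in> carrier AG" using X by (rule starA_carrier)
  have c: "barA X \<in> carrier AG" unfolding barA_def using X sX halfA_carrier
    by (intro AG.m_closed AG.a_closed)
  have "starA (barA X) = (starA X \<oplus>\<^bsub>AG\<^esub> X) \<otimes>\<^bsub>AG\<^esub> halfA"
    unfolding barA_def using X sX
    by (simp add: starA_mult halfA_carrier starA_add starA_starA starA_halfA)
  also have "\<dots> = halfA \<otimes>\<^bsub>AG\<^esub> (starA X \<oplus>\<^bsub>AG\<^esub> X)"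
    using X sX by (intro symmetric_central[symmetric]) (simp_all add: halfA_carrier starA_halfA)
  also have "\<dots> = barA X" unfolding barA_def using X sX by (simp add: AG.a_comm)
  finally show ?thesis using c by (simp add: carrier_sharpRing)
qed

lemma barA_carrier:
  fixes X :: "('g::group_add \<Rightarrow> 'k::field_char_0) set"
  shows "X \<in> carrier AG \<Longrightarrow> barA X \<in> carrier AG"
  using barA_sharp[of X] by (simp add: carrier_sharpRing)

lemma barA_one: "barA (\<one>\<^bsub>AG\<^esub>) = (\<one>\<^bsub>AG\<^esub> :: ('g::group_add \<Rightarrow> 'k::field_char_0) set)"
proof -
  have "halfA \<otimes>\<^bsub>AG\<^esub> (\<one>\<^bsub>AG\<^esub> \<oplus>\<^bsub>AG\<^esub> \<one>\<^bsub>AG\<^esub>)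
      = halfA \<otimes>\<^bsub>AG\<^esub> \<one>\<^bsub>AG\<^esub> \<oplus>\<^bsub>AG\<^esub> halfA \<otimes>\<^bsub>AG\<^esub> (\<one>\<^bsub>AG\<^esub> :: ('g \<Rightarrow> 'k) set)"
    by (rule AG.r_distr) (simp_all add: halfA_carrier)
  then show ?thesis unfolding barA_def starA_one by (simp add: halfA_carrier halfA_add)
qed

text \<open>The key identity bar(g) bar(X) = (bar(X g) + bar(X g^{-1}))/2.  Expanding, both sides
  equal (X c + c X^*)/4 with c = g + g^{-1}; here c and 1/2 are symmetric, hence central.\<close>
lemma barA_grpA_mult:
  fixes X :: "('g::group_add \<Rightarrow> 'k::field_char_0) set"
  assumes X: "X \<in> carrier AG"
  shows "barA (grpA l) \<otimes>\<^bsub>AG\<^esub> barA X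
         = halfA \<otimes>\<^bsub>AG\<^esub> (barA (X \<otimes>\<^bsub>AG\<^esub> grpA l) \<oplus>\<^bsub>AG\<^esub> barA (X \<otimes>\<^bsub>AG\<^esub> grpA (- l)))"
proof -
  define g where "g = (grpA l :: ('g \<Rightarrow> 'k) set)"
  define g' where "g' = (grpA (- l) :: ('g \<Rightarrow> 'k) set)"
  define h where "h = (halfA :: ('g \<Rightarrow> 'k) set)"
  define Xs where "Xs = starA X"
  define c where "c = g \<oplus>\<^bsub>AG\<^esub> g'"
  have carr: "g \<in> carrier AG" "g' \<in> carrier AG" "h \<in> carrier AG" "Xs \<in> carrier AG"
    unfolding g_def g'_def h_def Xs_def using X
    by (simp_all add: grpA_carrier halfA_carrier starA_carrier)
  have c: "c \<in> carrier AG" using carr by (simp add: c_def)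
  have sg: "starA g = g'" "starA g' = g" by (simp_all add: g_def g'_def starA_grpA)
  have sc: "starA c = c" unfolding c_def using carr sg by (simp add: starA_add AG.a_comm)
  have sh: "starA h = h" by (simp add: h_def starA_halfA)
  have cX: "X \<otimes>\<^bsub>AG\<^esub> c = c \<otimes>\<^bsub>AG\<^esub> X" using symmetric_central[OF c sc X] by simp
  have ch: "c \<otimes>\<^bsub>AG\<^esub> h = h \<otimes>\<^bsub>AG\<^esub> c" using symmetric_central[OF carr(3) sh c] by simp
  have b1: "barA (X \<otimes>\<^bsub>AG\<^esub> g) = h \<otimes>\<^bsub>AG\<^esub> (X \<otimes>\<^bsub>AG\<^esub> g \<oplus>\<^bsub>AG\<^esub> g' \<otimes>\<^bsub>AG\<^esub> Xs)"
    unfolding barA_def h_def Xs_def using X carr by (simp add: starA_mult sg)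
  have b2: "barA (X \<otimes>\<^bsub>AG\<^esub> g') = h \<otimes>\<^bsub>AG\<^esub> (X \<otimes>\<^bsub>AG\<^esub> g' \<oplus>\<^bsub>AG\<^esub> g \<otimes>\<^bsub>AG\<^esub> Xs)"
    unfolding barA_def h_def Xs_def using X carr by (simp add: starA_mult sg)
  have b3: "barA g = h \<otimes>\<^bsub>AG\<^esub> c" unfolding barA_def h_def c_def by (simp add: sg)
  have b4: "barA X = h \<otimes>\<^bsub>AG\<^esub> (X \<oplus>\<^bsub>AG\<^esub> Xs)" unfolding barA_def h_def Xs_def ..
  have "h \<otimes>\<^bsub>AG\<^esub> (barA (X \<otimes>\<^bsub>AG\<^esub> g) \<oplus>\<^bsub>AG\<^esub> barA (X \<otimes>\<^bsub>AG\<^esub> g'))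
      = h \<otimes>\<^bsub>AG\<^esub> (h \<otimes>\<^bsub>AG\<^esub> (X \<otimes>\<^bsub>AG\<^esub> c \<oplus>\<^bsub>AG\<^esub> c \<otimes>\<^bsub>AG\<^esub> Xs))"
    unfolding b1 b2 c_def using X carr by algebra
  also have "\<dots> = h \<otimes>\<^bsub>AG\<^esub> (h \<otimes>\<^bsub>AG\<^esub> (c \<otimes>\<^bsub>AG\<^esub> (X \<oplus>\<^bsub>AG\<^esub> Xs)))"
    using X carr c by (simp add: cX AG.r_distr)
  also have "\<dots> = (h \<otimes>\<^bsub>AG\<^esub> c) \<otimes>\<^bsub>AG\<^esub> (h \<otimes>\<^bsub>AG\<^esub> (X \<oplus>\<^bsub>AG\<^esub> Xs))"
  proof -
    have "h \<otimes>\<^bsub>AG\<^esub> (c \<otimes>\<^bsub>AG\<^esub> (X \<oplus>\<^bsub>AG\<^esub> Xs)) = c \<otimes>\<^bsub>AG\<^esub> (h \<otimes>\<^bsub>AG\<^esub> (X \<oplus>\<^bsub>AG\<^esub> Xs))"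
      using X carr c by (simp add: AG.m_assoc[symmetric] ch)
    then show ?thesis using X carr c by (simp add: AG.m_assoc)
  qed
  finally show ?thesis
    unfolding g_def[symmetric] g'_def[symmetric] h_def[symmetric] b3 b4 by (rule sym)
qed

subsection \<open>Ideals of kG^# and their generators\<close>

lemma sharp_ideal_closed:
  fixes I :: "('g::group_add \<Rightarrow> 'k::field_char_0) set set"
  assumes "ideal I sharpRing" and a: "a \<in> I"
  shows "b \<in> I \<Longrightarrow> a \<oplus>\<^bsub>AG\<^esub> b \<in> I"
    and "\<ominus>\<^bsub>AG\<^esub> a \<in> I"
    and "c \<in> carrier sharpRing \<Longrightarrow> c \<otimes>\<^bsub>AG\<^esub> a \<in> I"
    and "c \<in> carrier sharpRing \<Longrightarrow> a \<otimes>\<^bsub>AG\<^esub> c \<in> I"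
proof -
  interpret I: ideal I sharpRing by (rule assms(1))
  show "b \<in> I \<Longrightarrow> a \<oplus>\<^bsub>AG\<^esub> b \<in> I" using I.a_closed[OF a] by (simp add: sharpRing_ops)
  show "\<ominus>\<^bsub>AG\<^esub> a \<in> I" using I.a_inv_closed[OF a] sharpRing_uminus[OF I.Icarr[OF a]] by simp
  show "c \<in> carrier sharpRing \<Longrightarrow> c \<otimes>\<^bsub>AG\<^esub> a \<in> I" using I.I_l_closed[OF a] by (simp add: sharpRing_ops)
  show "c \<in> carrier sharpRing \<Longrightarrow> a \<otimes>\<^bsub>AG\<^esub> c \<in> I" using I.I_r_closed[OF a] by (simp add: sharpRing_ops)
qed

lemma sharp_minus_closed:
  fixes a b :: "('g::group_add \<Rightarrow> 'k::field_char_0) set"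
  assumes "a \<in> carrier sharpRing" "b \<in> carrier sharpRing"
  shows "a \<ominus>\<^bsub>AG\<^esub> b \<in> carrier sharpRing"
  unfolding a_minus_def using assms by (intro subringE(5,7)[OF subring_sharp])

lemma sharp_minus_in_set_add:
  fixes a b :: "('g::group_add \<Rightarrow> 'k::field_char_0) set"
  assumes "ideal J sharpRing" "a \<in> I" "b \<in> J"
  shows "a \<ominus>\<^bsub>AG\<^esub> b \<in> I <+>\<^bsub>sharpRing\<^esub> J"
  using assms sharp_ideal_closed(2)[OF assms(1,3)]
  by (auto simp: a_minus_def set_add_defs sharpRing_ops)

definition sharpGens :: "'g::group_add set \<Rightarrow> ('g \<Rightarrow> 'k::field_char_0) set set" where
  "sharpGens L = {barA (x \<otimes>\<^bsub>AG\<^esub> grpA l) \<ominus>\<^bsub>AG\<^esub> barA x | x l. x \<in> carrier AG \<and> l \<in> L}"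

definition sharpsharpGens :: "'g::group_add set \<Rightarrow> ('g \<Rightarrow> 'k::field_char_0) set set" where
  "sharpsharpGens L = {barA (x \<otimes>\<^bsub>AG\<^esub> grpA l) \<ominus>\<^bsub>AG\<^esub> barA (x \<otimes>\<^bsub>AG\<^esub> grpA (- l)) | x l.
        x \<in> carrier AG \<and> l \<in> L}"

definition bulletGens :: "'g::group_add set \<Rightarrow> ('g \<Rightarrow> 'k::field_char_0) set set" where
  "bulletGens L = {\<one>\<^bsub>AG\<^esub> \<ominus>\<^bsub>AG\<^esub> barA (grpA l) | l. l \<in> L}"

lemma generated_ideals:
  fixes L :: "'g::group_add set"
  shows "(Lsharp L :: ('g \<Rightarrow> 'k::field_char_0) set set) = Idl\<^bsub>sharpRing\<^esub> (sharpGens L)"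
  "Lsharpsharp L = Idl\<^bsub>sharpRing\<^esub> (sharpsharpGens L)"
  "Lbullet L = Idl\<^bsub>sharpRing\<^esub> (bulletGens L)"
  unfolding Lsharp_def sharpGens_def Lsharpsharp_def sharpsharpGens_def Lbullet_def bulletGens_def
  by (rule refl)+

lemma generators_carrier:
  fixes L :: "'g::group_add set"
  shows "(sharpGens L :: ('g \<Rightarrow> 'k::field_char_0) set set) \<subseteq> carrier sharpRing"
  "sharpsharpGens L \<subseteq> carrier sharpRing"
  "bulletGens L \<subseteq> carrier sharpRing"
  unfolding sharpGens_def sharpsharpGens_def bulletGens_def
  by (auto intro!: sharp_minus_closed barA_sharp AG.m_closed grpA_carrier S.one_closed[simplified sharpRing_ops])

text \<open>By the key identity, with P = bar(x g), Q = bar(x g^{-1}), B = bar(x), C = bar(g) and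
  h = 1/2:  P - B = h (P - Q) - (1 - C) B.\<close>
lemma sharp_generator_decomposition:
  fixes x :: "('g::group_add \<Rightarrow> 'k::field_char_0) set"
  assumes x: "x \<in> carrier AG"
  shows "barA (x \<otimes>\<^bsub>AG\<^esub> grpA l) \<ominus>\<^bsub>AG\<^esub> barA x
    = halfA \<otimes>\<^bsub>AG\<^esub> (barA (x \<otimes>\<^bsub>AG\<^esub> grpA l) \<ominus>\<^bsub>AG\<^esub> barA (x \<otimes>\<^bsub>AG\<^esub> grpA (- l)))
      \<ominus>\<^bsub>AG\<^esub> (\<one>\<^bsub>AG\<^esub> \<ominus>\<^bsub>AG\<^esub> barA (grpA l)) \<otimes>\<^bsub>AG\<^esub> barA x"
proof -
  define P where "P = barA (x \<otimes>\<^bsub>AG\<^esub> grpA l)"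
  define Q where "Q = barA (x \<otimes>\<^bsub>AG\<^esub> grpA (- l))"
  define B where "B = barA x"
  define C where "C = barA (grpA l :: ('g \<Rightarrow> 'k) set)"
  define h where "h = (halfA :: ('g \<Rightarrow> 'k) set)"
  have carr: "P \<in> carrier AG" "Q \<in> carrier AG" "B \<in> carrier AG" "C \<in> carrier AG" "h \<in> carrier AG"
    unfolding P_def Q_def B_def C_def h_def using x
    by (auto intro!: barA_carrier AG.m_closed grpA_carrier halfA_carrier)
  have key: "C \<otimes>\<^bsub>AG\<^esub> B = h \<otimes>\<^bsub>AG\<^esub> (P \<oplus>\<^bsub>AG\<^esub> Q)"
    unfolding P_def Q_def B_def C_def h_def by (rule barA_grpA_mult[OF x])
  have "h \<otimes>\<^bsub>AG\<^esub> (P \<ominus>\<^bsub>AG\<^esub> Q) \<ominus>\<^bsub>AG\<^esub> (\<one>\<^bsub>AG\<^esub> \<ominus>\<^bsub>AG\<^esub> C) \<otimes>\<^bsub>AG\<^esub> B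
      = h \<otimes>\<^bsub>AG\<^esub> (P \<ominus>\<^bsub>AG\<^esub> Q) \<oplus>\<^bsub>AG\<^esub> C \<otimes>\<^bsub>AG\<^esub> B \<ominus>\<^bsub>AG\<^esub> B"
    using carr by algebra
  also have "\<dots> = h \<otimes>\<^bsub>AG\<^esub> (P \<ominus>\<^bsub>AG\<^esub> Q) \<oplus>\<^bsub>AG\<^esub> h \<otimes>\<^bsub>AG\<^esub> (P \<oplus>\<^bsub>AG\<^esub> Q) \<ominus>\<^bsub>AG\<^esub> B"
    by (simp only: key)
  also have "\<dots> = (h \<oplus>\<^bsub>AG\<^esub> h) \<otimes>\<^bsub>AG\<^esub> P \<ominus>\<^bsub>AG\<^esub> B"
    using carr by algebra
  also have "\<dots> = P \<ominus>\<^bsub>AG\<^esub> B"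
    using carr by (simp add: h_def halfA_add)
  finally show ?thesis unfolding P_def Q_def B_def C_def h_def by (rule sym)
qed

lemma sharpGens_in_set_add:
  fixes L :: "'g::group_add set"
  shows "(sharpGens L :: ('g \<Rightarrow> 'k::field_char_0) set set) \<subseteq> Idl\<^bsub>sharpRing\<^esub> (sharpsharpGens L) <+>\<^bsub>sharpRing\<^esub> Idl\<^bsub>sharpRing\<^esub> (bulletGens L)"
proof
  fix u :: "('g \<Rightarrow> 'k) set"
  assume "u \<in> sharpGens L"
  then obtain x l where x: "x \<in> carrier AG" "l \<in> L"
    and u: "u = barA (x \<otimes>\<^bsub>AG\<^esub> grpA l) \<ominus>\<^bsub>AG\<^esub> barA x"
    unfolding sharpGens_def by blast
  have I2: "ideal (Idl\<^bsub>sharpRing\<^esub> (sharpsharpGens L)) sharpRing"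
    by (rule S.genideal_ideal[OF generators_carrier(2)])
  have I3: "ideal (Idl\<^bsub>sharpRing\<^esub> (bulletGens L)) sharpRing"
    by (rule S.genideal_ideal[OF generators_carrier(3)])
  have "barA (x \<otimes>\<^bsub>AG\<^esub> grpA l) \<ominus>\<^bsub>AG\<^esub> barA (x \<otimes>\<^bsub>AG\<^esub> grpA (- l)) \<in> Idl\<^bsub>sharpRing\<^esub> (sharpsharpGens L)"
    using x S.genideal_self[OF generators_carrier(2)] unfolding sharpsharpGens_def by blast
  then have v: "halfA \<otimes>\<^bsub>AG\<^esub> (barA (x \<otimes>\<^bsub>AG\<^esub> grpA l) \<ominus>\<^bsub>AG\<^esub> barA (x \<otimes>\<^bsub>AG\<^esub> grpA (- l)))
      \<in> Idl\<^bsub>sharpRing\<^esub> (sharpsharpGens L)"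
    by (rule sharp_ideal_closed(3)[OF I2 _ halfA_sharp])
  have "\<one>\<^bsub>AG\<^esub> \<ominus>\<^bsub>AG\<^esub> barA (grpA l) \<in> Idl\<^bsub>sharpRing\<^esub> (bulletGens L)"
    using x S.genideal_self[OF generators_carrier(3)] unfolding bulletGens_def by blast
  then have w: "(\<one>\<^bsub>AG\<^esub> \<ominus>\<^bsub>AG\<^esub> barA (grpA l)) \<otimes>\<^bsub>AG\<^esub> barA x \<in> Idl\<^bsub>sharpRing\<^esub> (bulletGens L)"
    by (rule sharp_ideal_closed(4)[OF I3 _ barA_sharp[OF x(1)]])
  show "u \<in> Idl\<^bsub>sharpRing\<^esub> (sharpsharpGens L) <+>\<^bsub>sharpRing\<^esub> Idl\<^bsub>sharpRing\<^esub> (bulletGens L)"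
    unfolding u sharp_generator_decomposition[OF x(1)] by (rule sharp_minus_in_set_add[OF I3 v w])
qed

text \<open>With x' = x g^{-1}:  bar(x g) - bar(x g^{-1}) = (bar(x g) - bar(x)) + (bar(x' g) - bar(x')).\<close>
lemma sharpsharpGens_in_Lsharp:
  fixes L :: "'g::group_add set"
  shows "(sharpsharpGens L :: ('g \<Rightarrow> 'k::field_char_0) set set) \<subseteq> Idl\<^bsub>sharpRing\<^esub> (sharpGens L)"
proof
  fix v :: "('g \<Rightarrow> 'k) set"
  assume "v \<in> sharpsharpGens L"
  then obtain x l where x: "x \<in> carrier AG" "l \<in> L"
    and v: "v = barA (x \<otimes>\<^bsub>AG\<^esub> grpA l) \<ominus>\<^bsub>AG\<^esub> barA (x \<otimes>\<^bsub>AG\<^esub> grpA (- l))"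
    unfolding sharpsharpGens_def by blast
  define x' where "x' = x \<otimes>\<^bsub>AG\<^esub> grpA (- l)"
  have x': "x' \<in> carrier AG" unfolding x'_def using x by (simp add: grpA_carrier)
  have x'g: "x' \<otimes>\<^bsub>AG\<^esub> grpA l = x"
    unfolding x'_def using x by (simp add: AG.m_assoc grpA_carrier grpA_mult grpA_zero)
  have I1: "ideal (Idl\<^bsub>sharpRing\<^esub> (sharpGens L)) sharpRing"
    by (rule S.genideal_ideal[OF generators_carrier(1)])
  have in_gens: "barA (y \<otimes>\<^bsub>AG\<^esub> grpA l) \<ominus>\<^bsub>AG\<^esub> barA y \<in> Idl\<^bsub>sharpRing\<^esub> (sharpGens L)"
    if "y \<in> carrier AG" for y
    using that x S.genideal_self[OF generators_carrier(1)] unfolding sharpGens_def by blast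
  have carr: "barA (x \<otimes>\<^bsub>AG\<^esub> grpA l) \<in> carrier AG" "barA x \<in> carrier AG" "barA x' \<in> carrier AG"
    using x x' by (simp_all add: barA_carrier grpA_carrier)
  have "v = (barA (x \<otimes>\<^bsub>AG\<^esub> grpA l) \<ominus>\<^bsub>AG\<^esub> barA x) \<oplus>\<^bsub>AG\<^esub> (barA (x' \<otimes>\<^bsub>AG\<^esub> grpA l) \<ominus>\<^bsub>AG\<^esub> barA x')"
    unfolding v x'g unfolding x'_def using carr[unfolded x'_def] by algebra
  then show "v \<in> Idl\<^bsub>sharpRing\<^esub> (sharpGens L)"
    using sharp_ideal_closed(1)[OF I1 in_gens[OF x(1)] in_gens[OF x']] by simp
qed

text \<open>1 - bar(g) = -(bar(1 g) - bar(1)).\<close>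
lemma bulletGens_in_Lsharp:
  fixes L :: "'g::group_add set"
  shows "(bulletGens L :: ('g \<Rightarrow> 'k::field_char_0) set set) \<subseteq> Idl\<^bsub>sharpRing\<^esub> (sharpGens L)"
proof
  fix w :: "('g \<Rightarrow> 'k) set"
  assume "w \<in> bulletGens L"
  then obtain l where l: "l \<in> L" and w: "w = \<one>\<^bsub>AG\<^esub> \<ominus>\<^bsub>AG\<^esub> barA (grpA l)"
    unfolding bulletGens_def by blast
  define I :: "('g \<Rightarrow> 'k) set set" where "I = Idl\<^bsub>sharpRing\<^esub> (sharpGens L)"
  have "ideal I sharpRing"
    unfolding I_def by (rule S.genideal_ideal[OF generators_carrier(1)])
  moreover have "barA (\<one>\<^bsub>AG\<^esub> \<otimes>\<^bsub>AG\<^esub> grpA l) \<ominus>\<^bsub>AG\<^esub> barA \<one>\<^bsub>AG\<^esub> \<in> I"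
    using l S.genideal_self[OF generators_carrier(1)] unfolding sharpGens_def I_def by blast
  ultimately have "\<ominus>\<^bsub>AG\<^esub> (barA (grpA l) \<ominus>\<^bsub>AG\<^esub> \<one>\<^bsub>AG\<^esub>) \<in> I"
    by (intro sharp_ideal_closed(2)) (simp_all add: grpA_carrier barA_one)
  moreover have "barA (grpA l :: ('g \<Rightarrow> 'k) set) \<in> carrier AG"
    by (simp add: barA_carrier grpA_carrier)
  then have "\<ominus>\<^bsub>AG\<^esub> (barA (grpA l) \<ominus>\<^bsub>AG\<^esub> \<one>\<^bsub>AG\<^esub>) = w"
    unfolding w by algebra
  ultimately show "w \<in> Idl\<^bsub>sharpRing\<^esub> (sharpGens L)" unfolding I_def by simp
qed

theorem mainTheorem5:
  fixes L :: "'g::group_add set"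
  shows "(Lsharp L :: ('g \<Rightarrow> 'k::field_char_0) set set)
           = Lsharpsharp L <+>\<^bsub>sharpRing\<^esub> Lbullet L"
  unfolding generated_ideals
  by (rule S.genideal_eq_set_add[OF generators_carrier sharpGens_in_set_add
        sharpsharpGens_in_Lsharp bulletGens_in_Lsharp])

end
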